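(* Let $f:[0,1]\times\mathbb{R}\rightarrow\mathbb{R}$ be continuous and assume there exists $\varphi\in\Phi$ such that: (K1) $0\leq f(t,b)-f(t,a)\leq9\sqrt{3}\,\varphi(b-a)$ for all $t\in[0,1]$ and all $a,b\in\mathbb{R}$ with $a\leq b$; (K2) there exists $x_{0}\in C([0,1])$ such that $x_{0}(t)\leq\int_{0}^{1}G(t,s)f(s,x_{0}(s))\,\mathrm{d}s$ for all $t\in[0,1]$. Then the boundary value problem \[ x'''(t)+f(t,x(t))=0,\ t\in(0,1),\qquad x(0)=x(1)=x''(0)=0 \] has a unique solution.
   Context: $C([0,1])$ denotes real continuous functions on $[0,1]$. $G(t,s)=\frac12(1-t)(t-s^2)$ for $0\leq s\leq t\leq1$ and $G(t,s)=\frac12 t(1-s)^2$ for $0\leq t\leq s\leq1$. $\Phi$ is the set of all nondecreasing functions $\varphi:[0,+\infty)\rightarrow[0,+\infty)$ such that for every $\varepsilon>0$ there exists $\delta(\varepsilon)>0$ with $\varepsilon\leq t<\varepsilon+\delta(\varepsilon)\Rightarrow\varphi(t)<\varepsilon$. *)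

theory Defs
  imports "HOL-Analysis.Analysis"
begin

definition G :: "real \<Rightarrow> real \<Rightarrow> real" where
  "G t s = (if s \<le> t then (1/2) * (1 - t) * (t - s^2) else (1/2) * t * (1 - s)^2)"

definition Phi :: "(real \<Rightarrow> real) set" where
  "Phi = {\<phi>. mono_on {0..} \<phi> \<and> (\<forall>t\<ge>0. \<phi> t \<ge> 0) \<and>
     (\<forall>\<epsilon>>0. \<exists>\<delta>>0. \<forall>t. \<epsilon> \<le> t \<and> t < \<epsilon> + \<delta> \<longrightarrow> \<phi> t < \<epsilon>)}"

definition is_bvp_solution :: "(real \<Rightarrow> real \<Rightarrow> real) \<Rightarrow> (real \<Rightarrow> real) \<Rightarrow> bool" where
  "is_bvp_solution f x \<longleftrightarrow>
     continuous_on {0..1} x \<and>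
     (\<exists>x1 x2 x3.
        (\<forall>t\<in>{0..1}. (x has_real_derivative x1 t) (at t within {0..1})) \<and>
        (\<forall>t\<in>{0..1}. (x1 has_real_derivative x2 t) (at t within {0..1})) \<and>
        (\<forall>t\<in>{0<..<1}. (x2 has_real_derivative x3 t) (at t)) \<and>
        (\<forall>t\<in>{0<..<1}. x3 t + f t (x t) = 0) \<and>
        x 0 = 0 \<and> x 1 = 0 \<and> x2 0 = 0)"

end

theory Submission
  imports Defs
begin

text \<open>Solutions of the boundary value problem are exactly the continuous fixed points of
  \<open>(A x)(t) = \<integral>\<^sub>0\<^sup>1 G(t,s) f(s,x(s)) ds\<close>. Since \<open>G \<ge> 0\<close> and
  \<open>\<integral>\<^sub>0\<^sup>1 G(t,s) ds = (t - t\<^sup>3)/6 \<le> 1/(9\<surd>3)\<close>, the bound in (K1) gives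
  \<open>\<parallel>A x - A y\<parallel>\<^sub>\<infinity> \<le> \<phi>(\<parallel>x - y\<parallel>\<^sub>\<infinity>)\<close>, and the Meir--Keeler condition defining \<open>\<Phi>\<close>
  suffices for Banach's argument: the Picard iterates form a Cauchy sequence.\<close>

lemma Phi_less:
  assumes "\<phi> \<in> Phi" and "t > 0"
  shows "\<phi> t < t"
proof -
  obtain \<delta> where "\<delta> > 0" and "\<forall>s. t \<le> s \<and> s < t + \<delta> \<longrightarrow> \<phi> s < t"
    using assms unfolding Phi_def by blast
  then show ?thesis by auto
qed

lemma Phi_le:
  assumes phi: "\<phi> \<in> Phi" and "t \<ge> 0"
  shows "\<phi> t \<le> t"
proof (cases "t = 0")
  case True
  have "\<phi> 0 \<le> e" if "e > 0" for e
  proof -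
    have "\<phi> 0 \<le> \<phi> e"
      using phi that unfolding Phi_def by (auto intro: mono_onD)
    with Phi_less[OF phi that] show ?thesis by simp
  qed
  with True show ?thesis using field_le_epsilon[of "\<phi> 0" 0] by simp
next
  case False
  with assms(2) show ?thesis using Phi_less[OF phi, of t] by simp
qed

lemma Phi_contraction_nonexpansive:
  fixes T :: "'a::metric_space \<Rightarrow> 'a"
  assumes "\<phi> \<in> Phi" and "\<And>x y. dist (T x) (T y) \<le> \<phi> (dist x y)"
  shows "dist (T x) (T y) \<le> dist x y"
  using assms Phi_le[of \<phi> "dist x y"] by (meson order_trans zero_le_dist)

lemma Phi_contraction_fixpoint_unique:
  fixes T :: "'a::metric_space \<Rightarrow> 'a"
  assumes "\<phi> \<in> Phi" and "\<And>x y. dist (T x) (T y) \<le> \<phi> (dist x y)"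
    and "T x = x" and "T y = y"
  shows "x = y"
proof (rule ccontr)
  assume "x \<noteq> y"
  then have "\<phi> (dist x y) < dist x y" using assms(1) Phi_less by simp
  with assms(2)[of x y] assms(3,4) show False by simp
qed

lemma Phi_contraction_steps_tendsto_0:
  fixes T :: "'a::metric_space \<Rightarrow> 'a"
  assumes phi: "\<phi> \<in> Phi" and contr: "\<And>x y. dist (T x) (T y) \<le> \<phi> (dist x y)"
  shows "(\<lambda>n. dist ((T ^^ n) x) ((T ^^ Suc n) x)) \<longlonglongrightarrow> 0"
proof -
  define d where "d n = dist ((T ^^ n) x) ((T ^^ Suc n) x)" for n
  have d_contr: "d (Suc n) \<le> \<phi> (d n)" for n
    unfolding d_def using contr[of "(T ^^ n) x" "(T ^^ Suc n) x"] by simp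
  have "decseq d"
    unfolding d_def
    by (rule decseq_SucI) (simp add: Phi_contraction_nonexpansive[OF phi contr])
  then obtain L where L: "d \<longlonglongrightarrow> L" and L_le: "\<And>n. L \<le> d n"
    using decseq_convergent[of d 0] by (auto simp: d_def)
  have "L = 0"
  proof (rule ccontr)
    assume "L \<noteq> 0"
    moreover have "L \<ge> 0" using LIMSEQ_le_const[OF L, of 0] by (auto simp: d_def)
    ultimately have "L > 0" by simp
    then obtain \<delta> where "\<delta> > 0" and \<delta>: "\<forall>t. L \<le> t \<and> t < L + \<delta> \<longrightarrow> \<phi> t < L"
      using phi unfolding Phi_def by blast
    then obtain N where "\<bar>d N - L\<bar> < \<delta>"
      using L unfolding LIMSEQ_iff real_norm_def by blast
    then have "\<phi> (d N) < L" using \<delta> L_le[of N] by simp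
    then show False using d_contr[of N] L_le[of "Suc N"] by simp
  qed
  with L have "d \<longlonglongrightarrow> 0" by simp
  then show ?thesis unfolding d_def[abs_def] .
qed

text \<open>Inside the ball \<open>T\<close> is nonexpansive, and \<open>\<phi>\<close> maps the annulus \<open>[\<epsilon>, \<epsilon> + \<delta>)\<close>
  below \<open>\<epsilon>\<close>, so the orbit cannot leave it.\<close>

lemma Phi_contraction_orbit_near:
  fixes T :: "'a::metric_space \<Rightarrow> 'a"
  assumes phi: "\<phi> \<in> Phi" and contr: "\<And>x y. dist (T x) (T y) \<le> \<phi> (dist x y)"
    and annulus: "\<And>t. \<epsilon> \<le> t \<Longrightarrow> t < \<epsilon> + \<delta> \<Longrightarrow> \<phi> t < \<epsilon>"
    and "\<epsilon> \<ge> 0" and step: "dist z (T z) < \<delta> / 2"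
  shows "dist z ((T ^^ k) z) \<le> \<epsilon> + \<delta> / 2"
proof (induction k)
  case 0
  have "0 \<le> \<epsilon> + \<delta> / 2" using \<open>\<epsilon> \<ge> 0\<close> step zero_le_dist[of z "T z"] by linarith
  then show ?case by simp
next
  case (Suc k)
  have "dist (T z) (T ((T ^^ k) z)) \<le> \<epsilon>"
  proof (cases "dist z ((T ^^ k) z) < \<epsilon>")
    case True
    then show ?thesis using Phi_contraction_nonexpansive[OF phi contr, of z "(T ^^ k) z"] by simp
  next
    case False
    moreover have "dist z ((T ^^ k) z) < \<epsilon> + \<delta>"
      using Suc.IH step zero_le_dist[of z "T z"] by linarith
    ultimately have "\<phi> (dist z ((T ^^ k) z)) < \<epsilon>" using annulus by simp
    then show ?thesis using contr[of z "(T ^^ k) z"] by simp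
  qed
  then show ?case
    using step dist_triangle[of z "T ((T ^^ k) z)" "T z"] by simp
qed

lemma Phi_contraction_iterates_Cauchy:
  fixes T :: "'a::metric_space \<Rightarrow> 'a"
  assumes phi: "\<phi> \<in> Phi" and contr: "\<And>x y. dist (T x) (T y) \<le> \<phi> (dist x y)"
  shows "Cauchy (\<lambda>n. (T ^^ n) x)"
proof (rule metric_CauchyI)
  fix e :: real
  assume "e > 0"
  define \<epsilon> where "\<epsilon> = e / 4"
  have "\<epsilon> > 0" using \<open>e > 0\<close> by (simp add: \<epsilon>_def)
  then obtain \<delta>0 where "\<delta>0 > 0" and \<delta>0: "\<forall>t. \<epsilon> \<le> t \<and> t < \<epsilon> + \<delta>0 \<longrightarrow> \<phi> t < \<epsilon>"
    using phi unfolding Phi_def by blast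
  define \<delta> where "\<delta> = min \<delta>0 \<epsilon>"
  have "\<delta> > 0" "\<delta> \<le> \<epsilon>" and annulus: "\<And>t. \<epsilon> \<le> t \<Longrightarrow> t < \<epsilon> + \<delta> \<Longrightarrow> \<phi> t < \<epsilon>"
    using \<delta>0 \<open>\<delta>0 > 0\<close> \<open>\<epsilon> > 0\<close> by (auto simp: \<delta>_def)
  obtain N where "\<forall>n\<ge>N. \<bar>dist ((T ^^ n) x) ((T ^^ Suc n) x) - 0\<bar> < \<delta> / 2"
    using Phi_contraction_steps_tendsto_0[OF phi contr, of x] \<open>\<delta> > 0\<close>
    unfolding LIMSEQ_iff real_norm_def by (meson half_gt_zero)
  then have step: "dist ((T ^^ N) x) (T ((T ^^ N) x)) < \<delta> / 2" by simp
  have near: "dist ((T ^^ N) x) ((T ^^ m) x) \<le> \<epsilon> + \<delta> / 2" if "m \<ge> N" for m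
  proof -
    have "(T ^^ (m - N)) ((T ^^ N) x) = (T ^^ m) x"
      using that by (metis funpow_add comp_apply le_add_diff_inverse2)
    then show ?thesis
      using Phi_contraction_orbit_near[OF phi contr annulus _ step, of "m - N"] \<open>\<epsilon> > 0\<close> by simp
  qed
  have "dist ((T ^^ m) x) ((T ^^ n) x) < e" if "m \<ge> N" "n \<ge> N" for m n
    using near[OF that(1)] near[OF that(2)] dist_triangle3[of "(T ^^ m) x" "(T ^^ n) x" "(T ^^ N) x"]
      \<open>\<delta> \<le> \<epsilon>\<close> \<open>e > 0\<close>
    by (simp add: \<epsilon>_def)
  then show "\<exists>N. \<forall>m\<ge>N. \<forall>n\<ge>N. dist ((T ^^ m) x) ((T ^^ n) x) < e" by blast
qed

lemma Phi_contraction_has_fixpoint: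
  fixes T :: "'a::complete_space \<Rightarrow> 'a"
  assumes phi: "\<phi> \<in> Phi" and contr: "\<And>x y. dist (T x) (T y) \<le> \<phi> (dist x y)"
  shows "\<exists>z. T z = z"
proof -
  fix x :: 'a
  obtain z where z: "(\<lambda>n. (T ^^ n) x) \<longlonglongrightarrow> z"
    using Cauchy_convergent[OF Phi_contraction_iterates_Cauchy[OF phi contr]]
    unfolding convergent_def by blast
  have "(\<lambda>n. T ((T ^^ n) x)) \<longlonglongrightarrow> z"
    using LIMSEQ_Suc[OF z] by simp
  moreover have "(\<lambda>n. T ((T ^^ n) x)) \<longlonglongrightarrow> T z"
  proof (rule tendsto_dist_iff[THEN iffD2])
    show "(\<lambda>n. dist (T ((T ^^ n) x)) (T z)) \<longlonglongrightarrow> 0"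
      by (rule Lim_null_comparison[OF _ z[THEN tendsto_dist_iff[THEN iffD1]]])
        (simp add: Phi_contraction_nonexpansive[OF phi contr])
  qed
  ultimately have "z = T z" by (rule LIMSEQ_unique)
  then show ?thesis by metis
qed

lemma G_nonneg:
  assumes "t \<in> {0..1}" and "s \<in> {0..1}"
  shows "G t s \<ge> 0"
proof (cases "s \<le> t")
  case True
  have "s^2 \<le> s" using assms(2) by (simp add: power2_eq_square mult_left_le_one_le)
  with True assms(1) show ?thesis by (simp add: G_def)
next
  case False
  with assms(1) show ?thesis by (simp add: G_def)
qed

text \<open>The closed form of \<open>\<integral>\<^sub>0\<^sup>1 G(t,s) u(s) ds\<close>, obtained by splitting at \<open>s = t\<close>.\<close>

definition green_integral :: "(real \<Rightarrow> real) \<Rightarrow> real \<Rightarrow> real" where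
  "green_integral u t =
     1/2 * (1 - t) * (t * integral {0..t} u - integral {0..t} (\<lambda>s. s^2 * u s))
     + 1/2 * t * integral {t..1} (\<lambda>s. (1 - s)^2 * u s)"

definition green_integral' :: "(real \<Rightarrow> real) \<Rightarrow> real \<Rightarrow> real" where
  "green_integral' u t =
     1/2 * (integral {0..t} (\<lambda>s. s^2 * u s) + (1 - 2 * t) * integral {0..t} u
       + integral {t..1} (\<lambda>s. (1 - s)^2 * u s))"

definition green_integral'' :: "(real \<Rightarrow> real) \<Rightarrow> real \<Rightarrow> real" where
  "green_integral'' u t = - integral {0..t} u"

lemma G_mult_integral:
  assumes u: "continuous_on {0..1} u" and t: "t \<in> {0..1}"
  shows "(\<lambda>s. G t s * u s) integrable_on {0..1}"
    and "integral {0..1} (\<lambda>s. G t s * u s) = green_integral u t"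
proof -
  have u0: "continuous_on {0..t} u" and u1: "continuous_on {t..1} u"
    using t by (auto intro: continuous_on_subset[OF u])
  have left: "G t s * u s = 1/2 * (1 - t) * (t * u s - s^2 * u s)" if "s \<in> {0..t}" for s
    using that by (simp add: G_def field_simps)
  have right: "G t s * u s = 1/2 * t * ((1 - s)^2 * u s)" if "s \<in> {t..1}" for s
    using that by (cases "s = t") (auto simp: G_def power2_eq_square field_simps)
  have i0: "((\<lambda>s. G t s * u s) has_integral
      1/2 * (1 - t) * (t * integral {0..t} u - integral {0..t} (\<lambda>s. s^2 * u s))) {0..t}"
    by (rule has_integral_eq[OF left[symmetric]], assumption,
        intro has_integral_mult_right has_integral_diff integrable_integral
          integrable_continuous_interval continuous_intros u0)
  have i1: "((\<lambda>s. G t s * u s) has_integral 1/2 * t * integral {t..1} (\<lambda>s. (1 - s)^2 * u s)) {t..1}"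
    by (rule has_integral_eq[OF right[symmetric]], assumption,
        intro has_integral_mult_right integrable_integral
          integrable_continuous_interval continuous_intros u1)
  have "((\<lambda>s. G t s * u s) has_integral green_integral u t) {0..1}"
    unfolding green_integral_def using has_integral_combine[OF _ _ i0 i1] t by simp
  then show "(\<lambda>s. G t s * u s) integrable_on {0..1}"
    and "integral {0..1} (\<lambda>s. G t s * u s) = green_integral u t"
    by (auto simp: integral_unique has_integral_integrable)
qed

lemma green_integral_has_derivatives:
  assumes u: "continuous_on {0..1} u" and t: "t \<in> {0..1}"
  shows "(green_integral u has_real_derivative green_integral' u t) (at t within {0..1})"
    and "(green_integral' u has_real_derivative green_integral'' u t) (at t within {0..1})"
    and "(green_integral'' u has_real_derivative - u t) (at t within {0..1})"
proof -
  have d0: "((\<lambda>t. integral {0..t} u) has_real_derivative u t) (at t within {0..1})"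
    by (rule integral_has_real_derivative[OF u t])
  have d2: "((\<lambda>t. integral {0..t} (\<lambda>s. s^2 * u s)) has_real_derivative t^2 * u t)
      (at t within {0..1})"
    by (rule integral_has_real_derivative[OF _ t]) (intro continuous_intros u)
  have d3: "((\<lambda>t. integral {t..1} (\<lambda>s. (1 - s)^2 * u s)) has_real_derivative - ((1 - t)^2 * u t))
      (at t within {0..1})"
    by (rule integral_has_real_derivative'[OF _ t]) (intro continuous_intros u)
  show "(green_integral u has_real_derivative green_integral' u t) (at t within {0..1})"
    unfolding green_integral_def[abs_def]
    by (rule derivative_eq_intros d0 d2 d3 refl)+
      (simp add: green_integral'_def power2_eq_square field_simps)
  show "(green_integral' u has_real_derivative green_integral'' u t) (at t within {0..1})"
    unfolding green_integral'_def[abs_def]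
    by (rule derivative_eq_intros d0 d2 d3 refl)+
      (simp add: green_integral''_def power2_eq_square field_simps)
  show "(green_integral'' u has_real_derivative - u t) (at t within {0..1})"
    unfolding green_integral''_def[abs_def] by (rule derivative_eq_intros d0 refl)+
qed

lemma green_integral_boundary [simp]:
  "green_integral u 0 = 0" "green_integral u 1 = 0" "green_integral'' u 0 = 0"
  by (simp_all add: green_integral_def green_integral''_def)

lemma continuous_on_green_integral:
  "continuous_on {0..1} u \<Longrightarrow> continuous_on {0..1} (green_integral u)"
  by (rule DERIV_continuous_on[OF green_integral_has_derivatives(1)])

lemma green_integral_cong:
  assumes "\<And>s. s \<in> {0..1} \<Longrightarrow> u s = v s" and "t \<in> {0..1}"
  shows "green_integral u t = green_integral v t"
proof -
  have "integral {0..t} (\<lambda>s. w s * u s) = integral {0..t} (\<lambda>s. w s * v s)"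
    and "integral {t..1} (\<lambda>s. w s * u s) = integral {t..1} (\<lambda>s. w s * v s)" for w :: "real \<Rightarrow> real"
    using assms by (auto intro!: integral_cong)
  from this[of "\<lambda>_. 1"] this[of "\<lambda>s. s^2"] this[of "\<lambda>s. (1 - s)^2"] show ?thesis
    by (simp add: green_integral_def)
qed

lemma has_integral_shifted_square:
  fixes a b c :: real
  assumes "a \<le> b"
  shows "((\<lambda>s. (s - c)^2) has_integral ((b - c)^3 - (a - c)^3) / 3) {a..b}"
proof -
  have "((\<lambda>s. (s - c)^3 / 3) has_real_derivative (s - c)^2) (at s within {a..b})" for s
    by (auto intro!: derivative_eq_intros simp: power2_eq_square)
  then show ?thesis
    using fundamental_theorem_of_calculus[OF assms, of "\<lambda>s. (s - c)^3 / 3"]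
    by (simp add: has_real_derivative_iff_has_vector_derivative diff_divide_distrib)
qed

lemma integral_G:
  assumes t: "t \<in> {0..1}"
  shows "integral {0..1} (G t) = (t - t^3) / 6"
proof -
  have left: "integral {0..t} (\<lambda>s. s^2) = t^3 / 3"
    using has_integral_shifted_square[of 0 t 0] t by (simp add: integral_unique)
  have right: "integral {t..1} (\<lambda>s. (1 - s)^2) = (1 - t)^3 / 3"
    using has_integral_shifted_square[of t 1 1] t
    by (simp add: integral_unique power2_commute[of _ 1] power3_eq_cube algebra_simps)
  have "integral {0..1} (G t) = green_integral (\<lambda>_. 1) t"
    using G_mult_integral(2)[of "\<lambda>_. 1" t] t by simp
  also have "\<dots> = 1/2 * (1 - t) * (t * t - t^3 / 3) + 1/2 * t * ((1 - t)^3 / 3)"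
    using t by (simp add: green_integral_def left right)
  also have "\<dots> = (t - t^3) / 6"
    by (simp add: power3_eq_cube field_simps)
  finally show ?thesis .
qed

lemma sqrt3_t_minus_cube_le:
  fixes t :: real
  assumes "t \<ge> 0"
  shows "9 * sqrt 3 * (t - t^3) \<le> 6"
proof -
  define a where "a = sqrt 3"
  have a: "a^2 = 3" "a \<ge> 0" by (simp_all add: a_def)
  then have "6 - 9 * a * (t - t^3) = 3 * (a * t - 1)^2 * (a * t + 2)"
    by (simp add: power2_eq_square power3_eq_cube algebra_simps)
  moreover have "3 * (a * t - 1)^2 * (a * t + 2) \<ge> 0" using a assms by simp
  ultimately have "9 * a * (t - t^3) \<le> 6" by linarith
  then show ?thesis unfolding a_def .
qed

lemma abs_integral_G_mult_le:
  assumes w: "continuous_on {0..1} w" and bound: "\<And>s. s \<in> {0..1} \<Longrightarrow> \<bar>w s\<bar> \<le> K"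
    and t: "t \<in> {0..1}"
  shows "9 * sqrt 3 * \<bar>integral {0..1} (\<lambda>s. G t s * w s)\<bar> \<le> K"
proof -
  have G_int: "G t integrable_on {0..1}"
    using G_mult_integral(1)[of "\<lambda>_. 1" t] t by simp
  have "norm (integral {0..1} (\<lambda>s. G t s * w s)) \<le> integral {0..1} (\<lambda>s. G t s * K)"
  proof (rule Henstock_Kurzweil_Integration.integral_norm_bound_integral)
    show "(\<lambda>s. G t s * w s) integrable_on {0..1}" by (rule G_mult_integral(1)[OF w t])
    show "(\<lambda>s. G t s * K) integrable_on {0..1}" using G_int by (rule integrable_on_mult_left)
    show "norm (G t s * w s) \<le> G t s * K" if "s \<in> {0..1}" for s
      using G_nonneg[OF t that] bound[OF that] by (simp add: abs_mult mult_left_mono)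
  qed
  also have "\<dots> = K * ((t - t^3) / 6)"
    using integral_G[OF t] by (simp add: mult.commute)
  finally have "9 * sqrt 3 * \<bar>integral {0..1} (\<lambda>s. G t s * w s)\<bar> \<le> 9 * sqrt 3 * (K * ((t - t^3) / 6))"
    by simp
  also have "\<dots> = K * (9 * sqrt 3 * (t - t^3)) / 6" by simp
  also have "\<dots> \<le> K * 6 / 6"
    using sqrt3_t_minus_cube_le[of t] t bound[of 0] by (intro divide_right_mono mult_left_mono) auto
  finally show ?thesis by simp
qed

lemma DERIV_zero_interior_imp_constant:
  fixes g :: "real \<Rightarrow> real"
  assumes "continuous_on {a..b} g"
    and "\<And>t. t \<in> {a<..<b} \<Longrightarrow> (g has_real_derivative 0) (at t within {a..b})"
    and "t \<in> {a..b}"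
  shows "g t = g a"
proof (rule has_derivative_zero_unique_strong_interval[of "{a, b}" a b g "g a" t])
  fix x :: real
  assume "x \<in> {a..b} - {a, b}"
  then have "(g has_real_derivative 0) (at x within {a..b})" using assms(2) by simp
  then show "(g has_derivative (\<lambda>h. 0)) (at x within {a..b})"
    by (simp add: has_field_derivative_def lambda_zero)
qed (use assms in simp_all)

lemma third_order_homogeneous_bvp:
  assumes d1: "\<And>t. t \<in> {0..1} \<Longrightarrow> (w has_real_derivative w1 t) (at t within {0..1})"
    and d2: "\<And>t. t \<in> {0..1} \<Longrightarrow> (w1 has_real_derivative w2 t) (at t within {0..1})"
    and d3: "\<And>t. t \<in> {0<..<1} \<Longrightarrow> (w2 has_real_derivative 0) (at t)"
    and bc: "w 0 = 0" "w 1 = 0" "w2 0 = 0"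
    and t: "t \<in> {0..1}"
  shows "w t = 0"
proof -
  have "\<exists>c. \<forall>t\<in>{0<..<1}. w2 t = c"
    by (rule has_field_derivative_zero_constant) (simp_all add: has_field_derivative_at_within d3)
  then obtain c where w2_const: "\<And>t. t \<in> {0<..<1} \<Longrightarrow> w2 t = c" by blast
  define g where "g t = w1 t - c * t" for t
  have dg: "(g has_real_derivative w2 t - c) (at t within {0..1})" if "t \<in> {0..1}" for t
    unfolding g_def[abs_def] by (rule derivative_eq_intros d2[OF that] refl)+ simp
  have g_const: "g t = g 0" if "t \<in> {0..1}" for t
  proof (rule DERIV_zero_interior_imp_constant[OF DERIV_continuous_on[OF dg] _ that])
    fix s :: real
    assume "s \<in> {0<..<1}"
    then show "(g has_real_derivative 0) (at s within {0..1})" using dg[of s] w2_const[of s] by simp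
  qed
  have "c = 0"
  proof -
    have "(g has_real_derivative - c) (at 0 within {0..1})" using dg[of 0] bc(3) by simp
    moreover have "(g has_real_derivative 0) (at 0 within {0..1})"
      by (rule has_field_derivative_transform_within[OF DERIV_const[of "g 0"], where d=1])
        (auto intro!: g_const[symmetric])
    moreover have "at (0::real) within {0..1} \<noteq> bot"
      by (simp add: at_within_Icc_at_right)
    ultimately have "- c = 0" by (rule has_field_derivative_unique)
    then show ?thesis by simp
  qed
  define h where "h t = w t - g 0 * t" for t
  have dh: "(h has_real_derivative 0) (at t within {0..1})" if "t \<in> {0..1}" for t
  proof -
    have "(h has_real_derivative w1 t - g 0) (at t within {0..1})"
      unfolding h_def[abs_def] by (rule derivative_eq_intros d1[OF that] refl)+ simp
    then show ?thesis using g_const[OF that] \<open>c = 0\<close> by (simp add: g_def)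
  qed
  have "\<exists>k. \<forall>t\<in>{0..1}. h t = k"
    by (rule has_field_derivative_zero_constant) (simp_all add: dh)
  then have h_const: "h t = h 0" if "t \<in> {0..1}" for t
    using that by force
  have "h 0 = 0" by (simp add: h_def bc)
  then have "g 0 = 0" using h_const[of 1] bc(2) by (simp add: h_def)
  then show ?thesis using h_const[OF t] \<open>h 0 = 0\<close> by (simp add: h_def)
qed

lemma continuous_on_superposition:
  assumes "continuous_on ({0..1} \<times> UNIV) (\<lambda>(t, x). f t x)" and "continuous_on {0..1} x"
  shows "continuous_on {0..1} (\<lambda>s. f s (x s))"
proof -
  have "continuous_on {0..1} (\<lambda>s. (\<lambda>(t, x). f t x) (s, x s))"
    by (rule continuous_on_compose2[OF assms(1)]) (auto intro!: continuous_intros assms(2))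
  then show ?thesis by simp
qed

lemma bvp_solution_eq_green_integral:
  assumes cont: "continuous_on ({0..1} \<times> UNIV) (\<lambda>(t, x). f t x)"
    and sol: "is_bvp_solution f z" and t: "t \<in> {0..1}"
  shows "z t = green_integral (\<lambda>s. f s (z s)) t"
proof -
  define u where "u = (\<lambda>s. f s (z s))"
  obtain z1 z2 z3 where
    d1: "\<forall>t\<in>{0..1}. (z has_real_derivative z1 t) (at t within {0..1})" and
    d2: "\<forall>t\<in>{0..1}. (z1 has_real_derivative z2 t) (at t within {0..1})" and
    d3: "\<forall>t\<in>{0<..<1}. (z2 has_real_derivative z3 t) (at t)" and
    eq: "\<forall>t\<in>{0<..<1}. z3 t + f t (z t) = 0" and
    bc: "z 0 = 0" "z 1 = 0" "z2 0 = 0"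
    and zc: "continuous_on {0..1} z"
    using sol unfolding is_bvp_solution_def by blast
  have u: "continuous_on {0..1} u"
    unfolding u_def by (rule continuous_on_superposition[OF cont zc])
  note D = green_integral_has_derivatives[OF u]
  have "z t - green_integral u t = 0"
  proof (rule third_order_homogeneous_bvp[OF _ _ _ _ _ _ t])
    fix t :: real
    assume "t \<in> {0..1}"
    then show "((\<lambda>t. z t - green_integral u t) has_real_derivative z1 t - green_integral' u t)
        (at t within {0..1})"
      and "((\<lambda>t. z1 t - green_integral' u t) has_real_derivative z2 t - green_integral'' u t)
        (at t within {0..1})"
      using d1 d2 D by (auto intro!: derivative_intros)
  next
    fix t :: real
    assume t: "t \<in> {0<..<1}"
    then have "(green_integral'' u has_real_derivative - u t) (at t)"
      using D(3)[of t] at_within_Icc_at[of 0 t 1] by simp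
    then show "((\<lambda>t. z2 t - green_integral'' u t) has_real_derivative 0) (at t)"
      using d3 eq t DERIV_diff[of z2 "z3 t" t UNIV] by (force simp: u_def)
  qed (use bc in simp_all)
  then show ?thesis by (simp add: u_def)
qed

lemma green_integral_is_bvp_solution:
  assumes u: "continuous_on {0..1} u"
    and fixpoint: "\<And>t. t \<in> {0<..<1} \<Longrightarrow> u t = f t (green_integral u t)"
  shows "is_bvp_solution f (green_integral u)"
proof -
  note D = green_integral_has_derivatives[OF u]
  have interior: "(green_integral'' u has_real_derivative - u t) (at t)"
    "f t (green_integral u t) = u t" if t: "t \<in> {0<..<1}" for t
    using D(3)[of t] at_within_Icc_at[of 0 t 1] fixpoint[OF t] t by simp_all
  show ?thesis
    unfolding is_bvp_solution_def
    by (rule conjI[OF continuous_on_green_integral[OF u]], rule exI[where x = "green_integral' u"],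
        rule exI[where x = "green_integral'' u"], rule exI[where x = "\<lambda>t. - u t"])
      (simp add: D(1,2) interior)
qed

text \<open>Clamping the argument to \<open>[0,1]\<close> turns the integral operator into a self-map of the
  complete space of bounded continuous functions on \<open>\<real>\<close>.\<close>

definition green_operator :: "(real \<Rightarrow> real \<Rightarrow> real) \<Rightarrow> (real \<Rightarrow>\<^sub>C real) \<Rightarrow> (real \<Rightarrow>\<^sub>C real)" where
  "green_operator f x = Bcontfun (\<lambda>t. green_integral (\<lambda>s. f s (x s)) (clamp 0 1 t))"

lemma clamp_in_unit_interval: "clamp 0 1 t \<in> {0..1::real}"
  using clamp_in_interval[of 0 1 t] by (simp add: cbox_interval)

lemma clamp_unit_interval_id: "t \<in> {0..1::real} \<Longrightarrow> clamp 0 1 t = t"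
  using clamp_cancel_cbox[of t 0 1] by (simp add: cbox_interval)

lemma clamp_comp_in_bcontfun:
  fixes g :: "real \<Rightarrow> 'a::metric_space"
  assumes "continuous_on {0..1} g"
  shows "(\<lambda>t. g (clamp 0 1 t)) \<in> bcontfun"
proof -
  have g: "continuous_on (cbox 0 1) g" using assms by (simp add: cbox_interval)
  have "continuous_on UNIV (\<lambda>t. g (clamp 0 1 t))" by (rule clamp_continuous_on[OF g])
  moreover have "bounded (range (\<lambda>t. g (clamp 0 1 t)))"
    by (intro clamp_bounded compact_imp_bounded compact_continuous_image g compact_cbox)
  ultimately show ?thesis by (simp add: bcontfun_def)
qed

lemma apply_Bcontfun_clamp:
  fixes g :: "real \<Rightarrow> 'a::metric_space"
  assumes "continuous_on {0..1} g"
  shows "Bcontfun (\<lambda>t. g (clamp 0 1 t)) t = g (clamp 0 1 t)"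
  using Bcontfun_inverse[OF clamp_comp_in_bcontfun[OF assms]] by simp

lemma green_operator_apply:
  assumes "continuous_on ({0..1} \<times> UNIV) (\<lambda>(t, x). f t x)"
  shows "green_operator f x t = green_integral (\<lambda>s. f s (x s)) (clamp 0 1 t)"
  unfolding green_operator_def
  by (rule apply_Bcontfun_clamp[OF continuous_on_green_integral[OF
        continuous_on_superposition[OF assms continuous_on_apply_bcontfun]]])

lemma green_operator_Phi_contraction:
  assumes cont: "continuous_on ({0..1} \<times> UNIV) (\<lambda>(t, x). f t x)"
    and phi: "\<phi> \<in> Phi"
    and bound: "\<And>t a b. t \<in> {0..1} \<Longrightarrow> a \<le> b \<Longrightarrow> \<bar>f t b - f t a\<bar> \<le> 9 * sqrt 3 * \<phi> (b - a)"
  shows "dist (green_operator f x) (green_operator f y) \<le> \<phi> (dist x y)"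
proof (rule dist_bound)
  fix t :: real
  define s where "s = clamp 0 1 t"
  have s: "s \<in> {0..1}" unfolding s_def by (rule clamp_in_unit_interval)
  define u v where "u = (\<lambda>r. f r (x r))" and "v = (\<lambda>r. f r (y r))"
  have u: "continuous_on {0..1} u" and v: "continuous_on {0..1} v"
    unfolding u_def v_def by (rule continuous_on_superposition[OF cont continuous_on_apply_bcontfun])+
  have mono: "mono_on {0..} \<phi>" using phi by (simp add: Phi_def)
  have diff_bound: "\<bar>u r - v r\<bar> \<le> 9 * sqrt 3 * \<phi> (dist x y)" if r: "r \<in> {0..1}" for r
  proof -
    have "\<bar>u r - v r\<bar> \<le> 9 * sqrt 3 * \<phi> \<bar>x r - y r\<bar>"
      using bound[OF r, of "x r" "y r"] bound[OF r, of "y r" "x r"]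
      by (cases "x r \<le> y r") (simp_all add: u_def v_def abs_minus_commute)
    also have "\<phi> \<bar>x r - y r\<bar> \<le> \<phi> (dist x y)"
      by (rule mono_onD[OF mono]) (use dist_bounded[of x r y] in \<open>simp_all add: dist_real_def\<close>)
    then have "9 * sqrt 3 * \<phi> \<bar>x r - y r\<bar> \<le> 9 * sqrt 3 * \<phi> (dist x y)"
      by (rule mult_left_mono) simp
    finally show ?thesis .
  qed
  have "integral {0..1} (\<lambda>r. G s r * (u r - v r))
      = integral {0..1} (\<lambda>r. G s r * u r) - integral {0..1} (\<lambda>r. G s r * v r)"
    unfolding right_diff_distrib
    by (rule integral_diff[OF G_mult_integral(1)[OF u s] G_mult_integral(1)[OF v s]])
  also have "\<dots> = green_integral u s - green_integral v s"
    by (simp only: G_mult_integral(2)[OF u s] G_mult_integral(2)[OF v s])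
  finally have "9 * sqrt 3 * \<bar>green_integral u s - green_integral v s\<bar> \<le> 9 * sqrt 3 * \<phi> (dist x y)"
    using abs_integral_G_mult_le[OF continuous_on_diff[OF u v] diff_bound s] by simp
  then show "dist (green_operator f x t) (green_operator f y t) \<le> \<phi> (dist x y)"
    by (simp add: green_operator_apply[OF cont] dist_real_def s_def u_def v_def)
qed

lemma green_operator_fixpoint_eq:
  assumes cont: "continuous_on ({0..1} \<times> UNIV) (\<lambda>(t, x). f t x)"
    and F: "green_operator f F = F" and t: "t \<in> {0..1}"
  shows "F t = green_integral (\<lambda>s. f s (F s)) t"
proof -
  have "F t = green_operator f F t" by (simp only: F)
  also have "\<dots> = green_integral (\<lambda>s. f s (F s)) t"
    by (simp add: green_operator_apply[OF cont] clamp_unit_interval_id[OF t])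
  finally show ?thesis .
qed

lemma green_operator_fixpoint_bvp_solution:
  assumes cont: "continuous_on ({0..1} \<times> UNIV) (\<lambda>(t, x). f t x)"
    and F: "green_operator f F = F"
  shows "is_bvp_solution f (green_integral (\<lambda>s. f s (F s)))"
proof (rule green_integral_is_bvp_solution)
  show "continuous_on {0..1} (\<lambda>s. f s (F s))"
    by (rule continuous_on_superposition[OF cont continuous_on_apply_bcontfun])
  show "f t (F t) = f t (green_integral (\<lambda>s. f s (F s)) t)" if "t \<in> {0<..<1}" for t
    using green_operator_fixpoint_eq[OF cont F, of t] that by simp
qed

lemma bvp_solution_green_operator_fixpoint:
  assumes cont: "continuous_on ({0..1} \<times> UNIV) (\<lambda>(t, x). f t x)"
    and y: "is_bvp_solution f y"
  defines "Y \<equiv> Bcontfun (\<lambda>t. y (clamp 0 1 t))"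
  shows "green_operator f Y = Y"
proof (rule bcontfun_eqI)
  fix s :: real
  have "continuous_on {0..1} y" using y unfolding is_bvp_solution_def by blast
  then have Y_eq: "Y t = y (clamp 0 1 t)" for t
    unfolding Y_def by (rule apply_Bcontfun_clamp)
  have "green_operator f Y s = green_integral (\<lambda>r. f r (Y r)) (clamp 0 1 s)"
    by (rule green_operator_apply[OF cont])
  also have "\<dots> = green_integral (\<lambda>r. f r (y r)) (clamp 0 1 s)"
    by (rule green_integral_cong[OF _ clamp_in_unit_interval]) (simp add: Y_eq clamp_unit_interval_id)
  also have "\<dots> = y (clamp 0 1 s)"
    by (rule bvp_solution_eq_green_integral[OF cont y, symmetric]) (rule clamp_in_unit_interval)
  finally show "green_operator f Y s = Y s" by (simp add: Y_eq)
qed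

theorem corollary8:
  fixes f :: "real \<Rightarrow> real \<Rightarrow> real" and \<phi> :: "real \<Rightarrow> real"
  assumes cont: "continuous_on ({0..1} \<times> UNIV) (\<lambda>(t, x). f t x)"
    and phi: "\<phi> \<in> Phi"
    and K1: "\<And>t a b. t \<in> {0..1} \<Longrightarrow> a \<le> b \<Longrightarrow>
               0 \<le> f t b - f t a \<and> f t b - f t a \<le> 9 * sqrt 3 * \<phi> (b - a)"
    and K2: "\<exists>x0. continuous_on {0..1} x0 \<and>
               (\<forall>t\<in>{0..1}. x0 t \<le> integral {0..1} (\<lambda>s. G t s * f s (x0 s)))"
  shows "\<exists>x. is_bvp_solution f x \<and>
           (\<forall>y. is_bvp_solution f y \<longrightarrow> (\<forall>t\<in>{0..1}. y t = x t))"
proof -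
  have "\<bar>f t b - f t a\<bar> \<le> 9 * sqrt 3 * \<phi> (b - a)" if "t \<in> {0..1}" "a \<le> b" for t a b
    using K1[OF that] by (simp add: abs_of_nonneg)
  then have contr: "dist (green_operator f x) (green_operator f y) \<le> \<phi> (dist x y)"
    for x y :: "real \<Rightarrow>\<^sub>C real"
    by (rule green_operator_Phi_contraction[OF cont phi])
  obtain F where F: "green_operator f F = F"
    using Phi_contraction_has_fixpoint[OF phi contr] by blast
  have "y t = green_integral (\<lambda>s. f s (F s)) t"
    if y: "is_bvp_solution f y" and t: "t \<in> {0..1}" for y t
  proof -
    have "continuous_on {0..1} y" using y unfolding is_bvp_solution_def by blast
    moreover have "Bcontfun (\<lambda>t. y (clamp 0 1 t)) = F"
      using Phi_contraction_fixpoint_unique[OF phi contr]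
        bvp_solution_green_operator_fixpoint[OF cont y] F by blast
    ultimately show ?thesis
      using apply_Bcontfun_clamp[of y t] clamp_unit_interval_id[OF t]
        green_operator_fixpoint_eq[OF cont F t] by simp
  qed
  with green_operator_fixpoint_bvp_solution[OF cont F] show ?thesis by blast
qed

end
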